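(* For every tetrahedral erasure channel $W$, $A(W^{s})\le A(W)\bigl(1-A(W)/3\bigr)$ and $A(W^{p})\le A(W)\bigl(1-A(W)/3\bigr)$.
   Context: $\mathrm{TEC}(p,q,r,s,t)$ denotes a tetrahedral erasure channel with parameters $p,q,r,s,t\ge0$ summing to $1$. Its moment of inertia is $A(\mathrm{TEC}(p,q,r,s,t))=(q-r)^2+(r-s)^2+(s-q)^2$. For $W=\mathrm{TEC}(p,q,r,s,t)$, the serial child is $W^{s}=\mathrm{TEC}(p^2,\ ps+sq+qp,\ pq+qr+rp,\ pr+rs+sp,\ 1-\text{(sum of the other four)})$ and the parallel child is $W^{p}=\mathrm{TEC}(1-\text{(sum of the other four)},\ ts+sq+qt,\ tq+qr+rt,\ tr+rs+st,\ t^2)$. *)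

theory Defs
  imports Complex_Main
begin

type_synonym tec = "real \<times> real \<times> real \<times> real \<times> real"

definition is_tec :: "tec \<Rightarrow> bool" where
  "is_tec W = (case W of (p, q, r, s, t) \<Rightarrow>
     p \<ge> 0 \<and> q \<ge> 0 \<and> r \<ge> 0 \<and> s \<ge> 0 \<and> t \<ge> 0 \<and> p + q + r + s + t = 1)"

definition inertia :: "tec \<Rightarrow> real" where
  "inertia W = (case W of (p, q, r, s, t) \<Rightarrow> (q - r)^2 + (r - s)^2 + (s - q)^2)"

definition serial_child :: "tec \<Rightarrow> tec" where
  "serial_child W = (case W of (p, q, r, s, t) \<Rightarrow>
     (let p' = p^2; q' = p*s + s*q + q*p; r' = p*q + q*r + r*p; s' = p*r + r*s + s*p
      in (p', q', r', s', 1 - (p' + q' + r' + s'))))"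

definition parallel_child :: "tec \<Rightarrow> tec" where
  "parallel_child W = (case W of (p, q, r, s, t) \<Rightarrow>
     (let q' = t*s + s*q + q*t; r' = t*q + q*r + r*t; s' = t*r + r*s + s*t; t' = t^2
      in (1 - (q' + r' + s' + t'), q', r', s', t')))"

end

theory Submission
  imports Defs
begin

(* The differences of the child's middle parameters are those of the parent, rescaled:
   for either child q' - r' = (x + q)(s - r), and cyclically, where x = p for the serial child
   and x = t for the parallel one.  As x + q <= 1 - r - s <= 1 - |r - s|, the term
   (x + q)^2 (r - s)^2 is at most (r - s)^2 - |r - s|^3, so the inertia drops by at least
   the sum of the cubed distances |d|^3.  That sum controls A^2: by Cauchy-Schwarz
   A^2 = (sum |d|^2)^2 <= (sum |d|) (sum |d|^3), and the three distances between numbers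
   of total at most 1 add up to at most 2.  Hence the child inertia is at most
   A - A^2/2 <= A (1 - A/3). *)

lemma scaled_square_le_square_minus_abs_cube:
  fixes m d :: real
  assumes "0 \<le> m" "m + \<bar>d\<bar> \<le> 1"
  shows "(m * d)^2 \<le> d^2 - \<bar>d\<bar>^3"
proof -
  have "m^2 \<le> m" using assms by (simp add: power2_eq_square mult_left_le_one_le)
  also have "\<dots> \<le> 1 - \<bar>d\<bar>" using assms by linarith
  finally have "m^2 * d^2 \<le> (1 - \<bar>d\<bar>) * d^2" by (rule mult_right_mono) simp
  then show ?thesis by (simp add: power_mult_distrib algebra_simps power2_eq_square power3_eq_cube)
qed

lemma sum_squares_squared_le_sum_mult_sum_cubes:
  fixes u v w :: real
  assumes "0 \<le> u" "0 \<le> v" "0 \<le> w"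
  shows "(u^2 + v^2 + w^2)^2 \<le> (u + v + w) * (u^3 + v^3 + w^3)"
proof -
  have "(u + v + w) * (u^3 + v^3 + w^3) - (u^2 + v^2 + w^2)^2
      = u * v * (u - v)^2 + v * w * (v - w)^2 + w * u * (w - u)^2"
    by algebra
  moreover have "0 \<le> u * v * (u - v)^2 + v * w * (v - w)^2 + w * u * (w - u)^2"
    using assms by simp
  ultimately show ?thesis by linarith
qed

lemma sum_pairwise_distances_le_two:
  fixes q r s :: real
  assumes "0 \<le> q" "0 \<le> r" "0 \<le> s" "q + r + s \<le> 1"
  shows "\<bar>q - r\<bar> + \<bar>r - s\<bar> + \<bar>s - q\<bar> \<le> 2"
  using assms by linarith

lemma inertia_squared_le_sum_abs_cubes:
  fixes q r s :: real
  assumes "0 \<le> q" "0 \<le> r" "0 \<le> s" "q + r + s \<le> 1"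
  shows "((q - r)^2 + (r - s)^2 + (s - q)^2)^2 \<le> 2 * (\<bar>q - r\<bar>^3 + \<bar>r - s\<bar>^3 + \<bar>s - q\<bar>^3)"
proof -
  have "((q - r)^2 + (r - s)^2 + (s - q)^2)^2 = (\<bar>q - r\<bar>^2 + \<bar>r - s\<bar>^2 + \<bar>s - q\<bar>^2)^2"
    by simp
  also have "\<dots> \<le> (\<bar>q - r\<bar> + \<bar>r - s\<bar> + \<bar>s - q\<bar>) * (\<bar>q - r\<bar>^3 + \<bar>r - s\<bar>^3 + \<bar>s - q\<bar>^3)"
    by (rule sum_squares_squared_le_sum_mult_sum_cubes) simp_all
  also have "\<dots> \<le> 2 * (\<bar>q - r\<bar>^3 + \<bar>r - s\<bar>^3 + \<bar>s - q\<bar>^3)"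
    using sum_pairwise_distances_le_two[OF assms] by (intro mult_right_mono) simp_all
  finally show ?thesis .
qed

lemma child_inertia_le:
  fixes x q r s :: real
  assumes "0 \<le> x" "0 \<le> q" "0 \<le> r" "0 \<le> s" "x + q + r + s \<le> 1"
  defines "A \<equiv> (q - r)^2 + (r - s)^2 + (s - q)^2"
  shows "((x + q) * (s - r))^2 + ((x + r) * (q - s))^2 + ((x + s) * (r - q))^2 \<le> A - A^2 / 2"
proof -
  have "((x + q) * (s - r))^2 + ((x + r) * (q - s))^2 + ((x + s) * (r - q))^2
      \<le> ((s - r)^2 - \<bar>s - r\<bar>^3) + ((q - s)^2 - \<bar>q - s\<bar>^3) + ((r - q)^2 - \<bar>r - q\<bar>^3)"
    using assms
    by (intro add_mono scaled_square_le_square_minus_abs_cube; linarith)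
  also have "\<dots> = A - (\<bar>q - r\<bar>^3 + \<bar>r - s\<bar>^3 + \<bar>s - q\<bar>^3)"
    by (simp add: A_def abs_minus_commute power2_commute)
  also have "\<dots> \<le> A - A^2 / 2"
    using inertia_squared_le_sum_abs_cubes[of q r s] assms unfolding A_def by simp
  finally show ?thesis .
qed

lemma inertia_serial_child:
  "inertia (serial_child (p, q, r, s, t))
     = ((p + q) * (s - r))^2 + ((p + r) * (q - s))^2 + ((p + s) * (r - q))^2"
  by (simp add: serial_child_def inertia_def Let_def) algebra

lemma inertia_parallel_child:
  "inertia (parallel_child (p, q, r, s, t))
     = ((t + q) * (s - r))^2 + ((t + r) * (q - s))^2 + ((t + s) * (r - q))^2"
  by (simp add: parallel_child_def inertia_def Let_def) algebra

theorem mainTheorem2: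
  fixes W :: tec
  assumes "is_tec W"
  shows "inertia (serial_child W) \<le> inertia W * (1 - inertia W / 3)
    \<and> inertia (parallel_child W) \<le> inertia W * (1 - inertia W / 3)"
proof -
  obtain p q r s t where W: "W = (p, q, r, s, t)" by (cases W) auto
  have params: "0 \<le> p" "0 \<le> q" "0 \<le> r" "0 \<le> s" "0 \<le> t" "p + q + r + s + t = 1"
    using assms by (auto simp: W is_tec_def)
  define A where "A = inertia W"
  have A: "A = (q - r)^2 + (r - s)^2 + (s - q)^2" by (simp add: A_def W inertia_def)
  have "A - A^2 / 2 \<le> A * (1 - A / 3)" by (simp add: algebra_simps power2_eq_square)
  moreover have "inertia (serial_child W) \<le> A - A^2 / 2"
    unfolding W inertia_serial_child A using params by (intro child_inertia_le) simp_all
  moreover have "inertia (parallel_child W) \<le> A - A^2 / 2"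
    unfolding W inertia_parallel_child A using params by (intro child_inertia_le) simp_all
  ultimately show ?thesis unfolding A_def by linarith
qed

end
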